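(* Let $R(H)$ be the number of integer solutions $(x,a,b,c,d)\in[-2H,2H]\times[-H,H]^4$ to the equation \[ x^3-bx^2+(ac-4d)x-(a^2d-4bd+c^2)=0. \] Then $R(H)\ll H^2(\log H)^2$ as $H\to\infty$. *)

theory Defs
  imports Complex_Main "HOL-Library.Landau_Symbols"
begin

definition R :: "nat \<Rightarrow> nat" where
  "R H = card {t :: int \<times> int \<times> int \<times> int \<times> int.
      case t of (x, a, b, c, d) \<Rightarrow>
      \<bar>x\<bar> \<le> 2 * int H \<and> \<bar>a\<bar> \<le> int H \<and> \<bar>b\<bar> \<le> int H \<and> \<bar>c\<bar> \<le> int H \<and> \<bar>d\<bar> \<le> int H \<and>
      x^3 - b * x^2 + (a * c - 4 * d) * x - (a^2 * d - 4 * b * d + c^2) = 0}"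

end

theory Submission
  imports Defs "HOL-Analysis.Harmonic_Numbers"
begin

(*
  Multiplied by 4, the equation reads u v = w^2 with u = 4b - 4x - a^2, v = 4d - x^2 and
  w = ax - 2c.

  If w = 0, then u = 0 or v = 0, so c and one of b, d are determined by (x, a), where
  |ax| <= 2H, and the last coordinate is free.  There are O(H log H) such pairs (x, a), hence
  O(H^2 log H) of these solutions.

  If w <> 0, then u = g p^2, v = g q^2 and w = +-gpq, and for fixed (g, p, q, w) a solution is
  determined by (a, x).  Put A = |g| max(p, q)^2, which is at most 13 H^2.  When A >= 24H,
  g < 0 and a^2 (or x^2) lies within 12H of A, leaving O(H / sqrt A + 1) values; then
  |ax - w| <= 2H leaves O(H / sqrt A + 1) values for the other coordinate.  When A < 24H,
  a and x are O(sqrt H).  Either way a class has O(H^2 / A) elements, and summing over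
  |g|, p, q <= 13 H^2 gives O(H^2 log^2 H), because the sums of 1/|g| and of 1/max(p, q)^2
  are both O(log H).
*)

section \<open>Counting integers in short windows\<close>

lemma abs_le_square_int: "\<bar>y\<bar> \<le> (y::int)^2"
proof (cases "y = 0")
  case False
  then have "1 * \<bar>y\<bar> \<le> \<bar>y\<bar> * \<bar>y\<bar>"
    by (intro mult_right_mono) auto
  then show ?thesis
    by (simp add: power2_eq_square)
qed simp

lemma finite_square_le_int: "finite {y::int. y^2 \<le> L}"
proof -
  have "{y::int. y^2 \<le> L} \<subseteq> {-L..L}"
  proof
    fix y assume "y \<in> {y::int. y^2 \<le> L}"
    with abs_le_square_int[of y] show "y \<in> {-L..L}"
      by simp linarith
  qed
  then show ?thesis
    by (rule finite_subset) simp
qed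

(* card S <= diam S + 1, squared and scaled by A, so that window bounds need no square roots *)
lemma card_sq_le_of_pairwise_diff:
  fixes S :: "int set" and A B :: real
  assumes "finite S" "0 < A" "0 \<le> B"
    and diff: "\<And>y z. y \<in> S \<Longrightarrow> z \<in> S \<Longrightarrow> real_of_int (y - z)^2 * A \<le> B"
  shows "real (card S)^2 * A \<le> 2 * B + 2 * A"
proof (cases "S = {}")
  case True
  with assms show ?thesis by simp
next
  case False
  define D where "D = real_of_int (Max S - Min S)"
  have "card S \<le> card {Min S..Max S}"
    using \<open>finite S\<close> by (intro card_mono) auto
  moreover have "Min S \<le> Max S"
    using False \<open>finite S\<close> by simp
  ultimately have "real (card S) \<le> D + 1"
    unfolding D_def by simp
  then have "real (card S)^2 \<le> (D + 1)^2"
    by (intro power_mono) auto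
  also have "\<dots> \<le> 2 * D^2 + 2"
    using sum_squares_bound[of D 1] by (simp add: power2_eq_square algebra_simps)
  finally have "real (card S)^2 * A \<le> (2 * D^2 + 2) * A"
    using \<open>0 < A\<close> by (intro mult_right_mono) auto
  also have "\<dots> \<le> 2 * B + 2 * A"
    using diff[of "Max S" "Min S"] False \<open>finite S\<close> by (simp add: D_def algebra_simps)
  finally show ?thesis .
qed

lemma card_pos_near_square:
  fixes A h :: int
  assumes "0 < A" "0 \<le> h" "2 * h \<le> A"
  shows "real (card {y. 0 < y \<and> \<bar>y^2 - A\<bar> \<le> h})^2 * of_int A \<le> 8 * of_int h^2 + 2 * of_int A"
proof -
  let ?S = "{y. 0 < y \<and> \<bar>y^2 - A\<bar> \<le> h}"
  have "finite ?S"
    using finite_square_le_int[of "A + h"] by (rule finite_subset[rotated]) auto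
  moreover have "real_of_int (y - z)^2 * of_int A \<le> of_int (4 * h^2)" if "y \<in> ?S" "z \<in> ?S" for y z
  proof -
    have "A \<le> y^2 + z^2"
      using that \<open>2 * h \<le> A\<close> by (auto simp: abs_le_iff)
    moreover have "0 \<le> 2 * y * z"
      using that by simp
    ultimately have "A \<le> (y + z)^2"
      unfolding power2_sum by linarith
    then have "(y - z)^2 * A \<le> (y - z)^2 * (y + z)^2"
      by (intro mult_left_mono) auto
    also have "\<dots> = (y^2 - z^2)^2"
      by (simp add: power2_eq_square algebra_simps)
    also have "\<dots> \<le> (2 * h)^2"
      using that \<open>0 \<le> h\<close> unfolding abs_le_square_iff[symmetric] by auto
    also have "\<dots> = 4 * h^2"
      by (simp add: power_mult_distrib)
    finally show ?thesis
      by (metis of_int_le_iff of_int_mult of_int_power)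
  qed
  ultimately show ?thesis
    using card_sq_le_of_pairwise_diff[of ?S "of_int A" "of_int (4 * h^2)"] assms by simp
qed

lemma card_near_square:
  fixes A h :: int
  assumes "0 < A" "0 \<le> h" "2 * h \<le> A"
  shows "real (card {y. \<bar>y^2 - A\<bar> \<le> h})^2 * of_int A \<le> 32 * of_int h^2 + 8 * of_int A"
proof -
  let ?P = "{y. 0 < y \<and> \<bar>y^2 - A\<bar> \<le> h}"
  have "finite ?P"
    using finite_square_le_int[of "A + h"] by (rule finite_subset[rotated]) auto
  have "{y. \<bar>y^2 - A\<bar> \<le> h} \<subseteq> ?P \<union> uminus ` ?P"
  proof
    fix y assume y: "y \<in> {y. \<bar>y^2 - A\<bar> \<le> h}"
    then have "y \<noteq> 0" using assms by auto
    with y show "y \<in> ?P \<union> uminus ` ?P"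
      by (cases "0 < y") (auto intro!: image_eqI[of y uminus "-y"])
  qed
  then have "card {y. \<bar>y^2 - A\<bar> \<le> h} \<le> card ?P + card (uminus ` ?P)"
    using \<open>finite ?P\<close> card_Un_le by (meson card_mono finite_UnI finite_imageI le_trans)
  also have "\<dots> \<le> 2 * card ?P"
    using card_image_le[OF \<open>finite ?P\<close>, of uminus] by simp
  finally have "real (card {y. \<bar>y^2 - A\<bar> \<le> h})^2 \<le> 4 * real (card ?P)^2"
    using power_mono[of _ "2 * real (card ?P)" 2] by (simp add: power_mult_distrib)
  then have "real (card {y. \<bar>y^2 - A\<bar> \<le> h})^2 * of_int A \<le> 4 * (real (card ?P)^2 * of_int A)"
    using \<open>0 < A\<close> by (simp add: mult_right_mono)
  also have "\<dots> \<le> 32 * of_int h^2 + 8 * of_int A"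
    using card_pos_near_square[OF assms] by linarith
  finally show ?thesis .
qed

lemma finite_near_multiple:
  fixes y :: int
  assumes "y \<noteq> 0"
  shows "finite {z. \<bar>y * z - W\<bar> \<le> k}"
proof -
  have "{z. \<bar>y * z - W\<bar> \<le> k} \<subseteq> {-(\<bar>W\<bar> + k)..\<bar>W\<bar> + k}"
  proof
    fix z assume "z \<in> {z. \<bar>y * z - W\<bar> \<le> k}"
    moreover have "\<bar>z\<bar> \<le> \<bar>y * z\<bar>"
      using \<open>y \<noteq> 0\<close> by (simp add: abs_mult mult_le_cancel_right1) linarith
    ultimately show "z \<in> {-(\<bar>W\<bar> + k)..\<bar>W\<bar> + k}"
      by simp linarith
  qed
  then show ?thesis
    by (rule finite_subset) simp
qed

lemma card_near_multiple:
  fixes y k W :: int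
  assumes "y \<noteq> 0" "0 \<le> k"
  shows "real (card {z. \<bar>y * z - W\<bar> \<le> k})^2 * of_int y^2 \<le> 8 * of_int k^2 + 2 * of_int y^2"
proof -
  let ?S = "{z. \<bar>y * z - W\<bar> \<le> k}"
  have "real_of_int (z - z')^2 * of_int y^2 \<le> of_int (4 * k^2)" if "z \<in> ?S" "z' \<in> ?S" for z z'
  proof -
    have "(z - z')^2 * y^2 = (y * z - y * z')^2"
      by (simp add: power2_eq_square algebra_simps)
    also have "\<dots> \<le> (2 * k)^2"
      using that \<open>0 \<le> k\<close> unfolding abs_le_square_iff[symmetric] by auto
    also have "\<dots> = 4 * k^2"
      by (simp add: power_mult_distrib)
    finally show ?thesis
      by (metis of_int_le_iff of_int_mult of_int_power)
  qed
  then show ?thesis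
    using card_sq_le_of_pairwise_diff[of ?S "of_int y^2" "of_int (4 * k^2)"] finite_near_multiple assms by simp
qed

lemma card_Sigma_mult_sq_le:
  fixes E :: "('a \<times> 'b) set" and A B C :: real
  assumes "E \<subseteq> Sigma Y Z" "finite Y" "\<And>y. y \<in> Y \<Longrightarrow> finite (Z y)" "0 \<le> A" "0 \<le> C"
    and Y: "real (card Y)^2 * A \<le> B" and Z: "\<And>y. y \<in> Y \<Longrightarrow> real (card (Z y))^2 * A \<le> C"
  shows "(real (card E) * A)^2 \<le> B * C"
proof (cases "Y = {}")
  case True
  with assms show ?thesis
    by simp
next
  case False
  define m where "m = Max (card ` Z ` Y)"
  have "m \<in> card ` Z ` Y"
    unfolding m_def using False \<open>finite Y\<close> by (intro Max_in) auto
  then obtain y0 where "y0 \<in> Y" "m = card (Z y0)"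
    by auto
  have "card E \<le> card (Sigma Y Z)"
    using assms(1-3) by (intro card_mono) auto
  also have "\<dots> = (\<Sum>y\<in>Y. card (Z y))"
    using assms(2,3) by simp
  also have "\<dots> \<le> card Y * m"
  proof -
    have "card (Z y) \<le> m" if "y \<in> Y" for y
      unfolding m_def using \<open>finite Y\<close> that by (intro Max_ge) auto
    then show ?thesis
      using sum_bounded_above[of Y "\<lambda>y. card (Z y)" m] by simp
  qed
  finally have "real (card E) \<le> real (card Y) * real m"
    by (metis of_nat_le_iff of_nat_mult)
  then have "(real (card E) * A)^2 \<le> (real (card Y) * real m * A)^2"
    using \<open>0 \<le> A\<close> by (intro power_mono mult_right_mono) auto
  also have "\<dots> = (real (card Y)^2 * A) * (real m^2 * A)"
    by (simp add: power2_eq_square)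
  also have "\<dots> \<le> B * C"
  proof -
    have "0 \<le> real (card Y)^2 * A"
      using \<open>0 \<le> A\<close> by simp
    with Y have "0 \<le> B"
      by linarith
    then show ?thesis
      using Y Z[OF \<open>y0 \<in> Y\<close>] \<open>m = card (Z y0)\<close> \<open>0 \<le> A\<close> by (intro mult_mono) auto
  qed
  finally show ?thesis .
qed

lemma card_pairs_near_square_multiple:
  fixes E :: "(int \<times> int) set" and A h k W :: int
  assumes E: "E \<subseteq> {(y, z). \<bar>y^2 - A\<bar> \<le> h \<and> \<bar>y * z - W\<bar> \<le> k}"
    and "0 < A" "0 \<le> h" "2 * h \<le> A" "0 \<le> k"
  shows "(real (card E) * of_int A)^2
    \<le> (32 * of_int h^2 + 8 * of_int A) * (16 * of_int k^2 + 6 * of_int A)"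
proof -
  define Y where "Y = {y. \<bar>y^2 - A\<bar> \<le> h}"
  define Z where "Z = (\<lambda>y. {z. \<bar>y * z - W\<bar> \<le> k})"
  have "Y \<subseteq> {y. y^2 \<le> A + h}"
    by (auto simp: Y_def)
  then have "finite Y"
    using finite_square_le_int finite_subset by blast
  have Y_bounds: "y \<noteq> 0" "A \<le> 2 * y^2" "y^2 \<le> A + h" if "y \<in> Y" for y
    using that assms by (auto simp: Y_def)
  have "finite (Z y)" if "y \<in> Y" for y
    unfolding Z_def using Y_bounds(1)[OF that] by (rule finite_near_multiple)
  moreover have "real (card (Z y))^2 * of_int A \<le> 16 * of_int k^2 + 6 * of_int A" if "y \<in> Y" for y
  proof -
    have "real_of_int A \<le> of_int (2 * y^2)"
      using Y_bounds(2)[OF that] by (simp only: of_int_le_iff)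
    then have "real (card (Z y))^2 * of_int A \<le> real (card (Z y))^2 * of_int (2 * y^2)"
      by (rule mult_left_mono) simp
    also have "\<dots> \<le> 2 * (8 * of_int k^2 + 2 * of_int y^2)"
      using card_near_multiple[OF Y_bounds(1)[OF that] \<open>0 \<le> k\<close>, of W] by (simp add: Z_def)
    also have "\<dots> \<le> 16 * of_int k^2 + 6 * of_int A"
    proof -
      have "2 * (8 * k^2 + 2 * y^2) \<le> 16 * k^2 + 6 * A"
        using Y_bounds(3)[OF that] \<open>2 * h \<le> A\<close> by (simp add: algebra_simps)
      then have "real_of_int (2 * (8 * k^2 + 2 * y^2)) \<le> of_int (16 * k^2 + 6 * A)"
        by (simp only: of_int_le_iff)
      then show ?thesis
        by simp
    qed
    finally show ?thesis .
  qed
  moreover have "E \<subseteq> Sigma Y Z"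
    using E by (auto simp: Y_def Z_def)
  ultimately show ?thesis
    using card_near_square[OF \<open>0 < A\<close> \<open>0 \<le> h\<close> \<open>2 * h \<le> A\<close>] \<open>finite Y\<close> \<open>0 < A\<close> \<open>0 \<le> k\<close>
    by (intro card_Sigma_mult_sq_le[where Y = Y and Z = Z]) (auto simp: Y_def)
qed

lemma card_pairs_small_squares:
  fixes E :: "(int \<times> int) set" and L :: int
  assumes "E \<subseteq> {(y, z). y^2 \<le> L \<and> z^2 \<le> L}" "0 \<le> L"
  shows "real (card E) \<le> 8 * of_int L + 2"
proof -
  define S where "S = {y::int. y^2 \<le> L}"
  have "finite S"
    unfolding S_def by (rule finite_square_le_int)
  have "real_of_int (y - z)^2 * 1 \<le> of_int (4 * L)" if "y \<in> S" "z \<in> S" for y z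
  proof -
    have "(y - z)^2 \<le> 2 * y^2 + 2 * z^2"
      using zero_le_power2[of "y + z"] by (simp add: power2_eq_square algebra_simps)
    also have "\<dots> \<le> 4 * L"
      using that by (simp add: S_def)
    finally show ?thesis
      by (metis mult_1_right of_int_le_iff of_int_power)
  qed
  then have "real (card S)^2 \<le> 8 * of_int L + 2"
    using card_sq_le_of_pairwise_diff[of S 1 "of_int (4 * L)"] \<open>finite S\<close> \<open>0 \<le> L\<close> by simp
  moreover have "card E \<le> card (S \<times> S)"
    using assms(1) \<open>finite S\<close> by (intro card_mono) (auto simp: S_def)
  then have "real (card E) \<le> real (card S)^2"
    by (simp add: card_cartesian_product power2_eq_square flip: of_nat_mult)
  ultimately show ?thesis
    by linarith
qed

lemma card_abs_mult_le:
  fixes n K :: nat and S :: "int set"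
  assumes "0 < n" "\<And>a. a \<in> S \<Longrightarrow> \<bar>a\<bar> * int n \<le> int K"
  shows "real (card S) \<le> 2 * real K / real n + 1"
proof -
  have "S \<subseteq> {-int (K div n)..int (K div n)}"
  proof
    fix a assume "a \<in> S"
    then have "int (nat \<bar>a\<bar> * n) \<le> int K"
      using assms(2) by simp
    then have "nat \<bar>a\<bar> \<le> K div n"
      using \<open>0 < n\<close> by (simp only: of_nat_le_iff less_eq_div_iff_mult_less_eq)
    then show "a \<in> {-int (K div n)..int (K div n)}"
      by auto
  qed
  then have "card S \<le> card {-int (K div n)..int (K div n)}"
    by (intro card_mono) auto
  also have "\<dots> = 2 * (K div n) + 1"
    by (simp add: nat_eq_iff)
  finally have "real (card S) \<le> 2 * real (K div n) + 1"
    by linarith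
  also have "\<dots> \<le> 2 * (real K / real n) + 1"
    using of_nat_div_le_of_nat[of K n] by (simp only: add_le_cancel_right mult_le_cancel_left_pos zero_less_numeral)
  finally show ?thesis
    by simp
qed

section \<open>Harmonic sums\<close>

lemma sum_inverse_max_square_le:
  "(\<Sum>p\<in>{1..M}. \<Sum>q\<in>{1..M}. 1 / real (max p q)^2) \<le> 2 * harm M"
proof -
  have half: "(\<Sum>p\<in>{1..M}. \<Sum>q\<in>{1..M}. if q \<le> p then 1 / real p^2 else 0) = harm M"
  proof -
    have "(\<Sum>q\<in>{1..M}. if q \<le> p then 1 / real p^2 else 0) = inverse (real p)" if "p \<in> {1..M}" for p
    proof -
      have "{q \<in> {1..M}. q \<le> p} = {1..p}"
        using that by auto
      then show ?thesis
        using that by (simp add: sum.inter_filter[symmetric] power2_eq_square field_simps)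
    qed
    then show ?thesis
      by (simp add: harm_def)
  qed
  have "(\<Sum>p\<in>{1..M}. \<Sum>q\<in>{1..M}. 1 / real (max p q)^2)
      \<le> (\<Sum>p\<in>{1..M}. \<Sum>q\<in>{1..M}. (if q \<le> p then 1 / real p^2 else 0) + (if p \<le> q then 1 / real q^2 else 0))"
    by (intro sum_mono) (auto simp: max_def)
  also have "\<dots> = 2 * harm M"
  proof -
    have "(\<Sum>p\<in>{1..M}. \<Sum>q\<in>{1..M}. if p \<le> q then 1 / real q^2 else 0)
        = (\<Sum>q\<in>{1..M}. \<Sum>p\<in>{1..M}. if p \<le> q then 1 / real q^2 else 0)"
      by (rule sum.swap)
    with half show ?thesis
      by (simp add: sum.distrib)
  qed
  finally show ?thesis .
qed

lemma harm_le_ln_plus_one: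
  assumes "1 \<le> n"
  shows "harm n \<le> ln (real n) + 1"
proof -
  have "harm n - ln (real n) \<le> harm 1 - ln (real (1::nat))"
    using euler_mascheroni_sequence_decreasing[of 1 n] assms by simp
  then show ?thesis
    by (simp add: harm_def)
qed

definition solutions :: "nat \<Rightarrow> (int \<times> int \<times> int \<times> int \<times> int) set" where
  "solutions H = {(x, a, b, c, d).
      \<bar>x\<bar> \<le> 2 * int H \<and> \<bar>a\<bar> \<le> int H \<and> \<bar>b\<bar> \<le> int H \<and> \<bar>c\<bar> \<le> int H \<and> \<bar>d\<bar> \<le> int H \<and>
      x^3 - b * x^2 + (a * c - 4 * d) * x - (a^2 * d - 4 * b * d + c^2) = 0}"

lemma R_eq_card_solutions: "R H = card (solutions H)"
  by (simp add: R_def solutions_def)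

lemma finite_solutions: "finite (solutions H)"
proof -
  let ?I = "{-int H..int H}"
  have "solutions H \<subseteq> {-2 * int H..2 * int H} \<times> ?I \<times> ?I \<times> ?I \<times> ?I"
    by (auto simp: solutions_def)
  then show ?thesis
    by (rule finite_subset) simp
qed

lemma solutions_square_eq:
  assumes "(x, a, b, c, d) \<in> solutions H"
  shows "(4 * b - 4 * x - a^2) * (4 * d - x^2) = (a * x - 2 * c)^2"
proof -
  have "4 * (x^3 - b * x^2 + (a * c - 4 * d) * x - (a^2 * d - 4 * b * d + c^2))
      = (4 * b - 4 * x - a^2) * (4 * d - x^2) - (a * x - 2 * c)^2"
    by (simp add: power2_eq_square power3_eq_cube algebra_simps)
  with assms show ?thesis
    by (simp add: solutions_def)
qed

section \<open>Solutions with a x = 2 c\<close>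

definition small_product_pairs :: "nat \<Rightarrow> (int \<times> int) set" where
  "small_product_pairs H = {(x, a). \<bar>x\<bar> \<le> 2 * int H \<and> \<bar>a\<bar> \<le> int H \<and> \<bar>a * x\<bar> \<le> 2 * int H}"

lemma card_degenerate_solutions:
  "card (solutions H \<inter> {(x, a, b, c, d). a * x - 2 * c = 0}) \<le> 2 * (card (small_product_pairs H) * (2 * H + 1))"
proof -
  let ?I = "{-int H..int H}"
  let ?Z = "solutions H \<inter> {(x, a, b, c, d). a * x - 2 * c = 0}"
  let ?Zb = "?Z \<inter> {(x, a, b, c, d). 4 * b - 4 * x - a^2 = 0}"
  let ?Zd = "?Z \<inter> {(x, a, b, c, d). 4 * d - x^2 = 0}"
  have "small_product_pairs H \<subseteq> {-2 * int H..2 * int H} \<times> ?I"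
    by (auto simp: small_product_pairs_def)
  then have "finite (small_product_pairs H)"
    by (rule finite_subset) simp
  then have fin: "finite (small_product_pairs H \<times> ?I)"
    by simp
  have "?Z \<subseteq> ?Zb \<union> ?Zd"
    using solutions_square_eq by fastforce
  then have "card ?Z \<le> card ?Zb + card ?Zd"
    by (meson card_Un_le card_mono finite_UnI finite_solutions finite_subset inf_le1 le_trans)
  also have "card ?Zb \<le> card (small_product_pairs H \<times> ?I)"
    by (rule card_inj_on_le[where f = "\<lambda>(x, a, b, c, d). ((x, a), d)", OF _ _ fin])
      (auto simp: inj_on_def solutions_def small_product_pairs_def abs_mult)
  also have "card ?Zd \<le> card (small_product_pairs H \<times> ?I)"
    by (rule card_inj_on_le[where f = "\<lambda>(x, a, b, c, d). ((x, a), b)", OF _ _ fin])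
      (auto simp: inj_on_def solutions_def small_product_pairs_def abs_mult)
  finally have "card ?Z \<le> 2 * card (small_product_pairs H \<times> ?I)"
    by simp
  moreover have "card ?I = 2 * H + 1"
    by (simp add: nat_eq_iff)
  ultimately show ?thesis
    by (simp add: card_cartesian_product)
qed

lemma card_small_product_pairs:
  "real (card (small_product_pairs H)) \<le> 8 * real H + 2 + 8 * real H * harm (2 * H)"
proof -
  define A where "A n = {a::int. \<bar>a\<bar> \<le> int H \<and> \<bar>a\<bar> * int n \<le> 2 * int H}" for n
  have fin: "finite ({int n, - int n} \<times> A n)" for n
    by (rule finite_subset[of _ "{int n, - int n} \<times> {-int H..int H}"]) (auto simp: A_def)
  have "small_product_pairs H \<subseteq> (\<Union>n\<in>{0..2 * H}. {int n, - int n} \<times> A n)"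
  proof clarify
    fix x a assume "(x, a) \<in> small_product_pairs H"
    then have "nat \<bar>x\<bar> \<in> {0..2 * H}" "x \<in> {int (nat \<bar>x\<bar>), - int (nat \<bar>x\<bar>)}" "a \<in> A (nat \<bar>x\<bar>)"
      by (auto simp: small_product_pairs_def A_def abs_mult)
    then show "(x, a) \<in> (\<Union>n\<in>{0..2 * H}. {int n, - int n} \<times> A n)"
      by blast
  qed
  then have "card (small_product_pairs H) \<le> (\<Sum>n\<in>{0..2 * H}. card ({int n, - int n} \<times> A n))"
    using fin by (intro order_trans[OF card_mono card_UN_le]) auto
  also have "\<dots> \<le> (\<Sum>n\<in>{0..2 * H}. 2 * card (A n))"
    by (intro sum_mono) (simp add: card_cartesian_product card_insert_if)
  finally have "real (card (small_product_pairs H)) \<le> real (\<Sum>n\<in>{0..2 * H}. 2 * card (A n))"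
    by (simp only: of_nat_le_iff)
  also have "\<dots> = (\<Sum>n\<in>{0..2 * H}. 2 * real (card (A n)))"
    by simp
  also have "\<dots> = 2 * real (card (A 0)) + (\<Sum>n\<in>{1..2 * H}. 2 * real (card (A n)))"
    by (simp add: sum.atLeast_Suc_atMost)
  also have "\<dots> \<le> 2 * (2 * real H + 1) + (\<Sum>n\<in>{1..2 * H}. 2 * (4 * real H * inverse (real n) + 1))"
  proof (intro add_mono mult_left_mono sum_mono)
    show "real (card (A 0)) \<le> 2 * real H + 1"
      using card_abs_mult_le[of 1 "A 0" H] by (simp add: A_def)
    show "real (card (A n)) \<le> 4 * real H * inverse (real n) + 1" if "n \<in> {1..2 * H}" for n
      using that card_abs_mult_le[of n "A n" "2 * H"] by (simp add: A_def field_simps)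
  qed simp_all
  also have "\<dots> = 8 * real H + 2 + 8 * real H * harm (2 * H)"
    by (simp add: sum.distrib harm_def sum_distrib_left algebra_simps)
  finally show ?thesis .
qed

section \<open>Solutions with a x \<noteq> 2 c\<close>

lemma product_eq_square_imp_common_factor:
  fixes u v w :: int
  assumes "u * v = w^2" "w \<noteq> 0"
  obtains g p q where "p \<noteq> 0" "q \<noteq> 0" "u = g * p^2" "v = g * q^2"
proof -
  define k where "k = gcd u w"
  have "k \<noteq> 0"
    using \<open>w \<noteq> 0\<close> by (simp add: k_def)
  then obtain p q where u: "u = p * k" and w: "w = q * k" and "coprime p q"
    using gcd_coprime_exists unfolding k_def by blast
  have "k * (p * v) = u * v"
    using u by (simp add: algebra_simps)
  also have "\<dots> = k * (k * q^2)"
    using assms(1) w by (simp add: power2_eq_square algebra_simps)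
  finally have pv: "p * v = k * q^2"
    using \<open>k \<noteq> 0\<close> by simp
  then have "p dvd k * q^2"
    by (metis dvd_triv_left)
  then have "p dvd k"
    using \<open>coprime p q\<close> by (simp add: coprime_dvd_mult_left_iff)
  then obtain g where g: "k = p * g"
    by blast
  have "p \<noteq> 0" "q \<noteq> 0"
    using u w assms by auto
  moreover have "u = g * p^2"
    using u g by (simp add: power2_eq_square)
  moreover have "v = g * q^2"
    using pv g \<open>p \<noteq> 0\<close> by (simp add: mult.assoc)
  ultimately show thesis
    by (rule that)
qed

(* For a solution with u = g p^2, v = g q^2 and w = W, these are the bounds on x, a, 4b, 4d and 2c. *)
definition ax_region :: "nat \<Rightarrow> int \<Rightarrow> int \<Rightarrow> int \<Rightarrow> int \<Rightarrow> (int \<times> int) set" where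
  "ax_region H g p q W = {(a, x).
      \<bar>a\<bar> \<le> int H \<and> \<bar>x\<bar> \<le> 2 * int H \<and> \<bar>a^2 + g * p^2 + 4 * x\<bar> \<le> 4 * int H \<and>
      \<bar>x^2 + g * q^2\<bar> \<le> 4 * int H \<and> \<bar>a * x - W\<bar> \<le> 2 * int H}"

lemma finite_ax_region: "finite (ax_region H g p q W)"
proof -
  have "ax_region H g p q W \<subseteq> {-int H..int H} \<times> {-2 * int H..2 * int H}"
    by (auto simp: ax_region_def)
  then show ?thesis
    by (rule finite_subset) simp
qed

lemma ax_region_param_bounds:
  assumes "(a, x) \<in> ax_region H g p q W"
  shows "\<bar>g\<bar> * p^2 \<le> 13 * int H^2" "\<bar>g\<bar> * q^2 \<le> 13 * int H^2"
proof -
  define h where "h = int H"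
  have mem: "\<bar>a\<bar> \<le> h" "\<bar>x\<bar> \<le> 2 * h" "\<bar>a^2 + g * p^2 + 4 * x\<bar> \<le> 4 * h" "\<bar>x^2 + g * q^2\<bar> \<le> 4 * h"
    using assms by (simp_all add: ax_region_def h_def)
  have "h \<le> h^2"
    using abs_le_square_int[of h] by (simp add: h_def)
  moreover have "a^2 \<le> h^2"
    using mem(1) abs_le_square_iff[of a h] by (simp add: h_def)
  moreover have "x^2 \<le> 4 * h^2"
    using mem(2) abs_le_square_iff[of x "2 * h"] by (simp add: h_def power_mult_distrib)
  moreover have "0 \<le> a^2" "0 \<le> x^2"
    by simp_all
  ultimately have "\<bar>g * p^2\<bar> \<le> 13 * h^2" "\<bar>g * q^2\<bar> \<le> 13 * h^2"
    using mem by (simp_all only: abs_le_iff; linarith)+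
  then show "\<bar>g\<bar> * p^2 \<le> 13 * int H^2" "\<bar>g\<bar> * q^2 \<le> 13 * int H^2"
    by (simp_all add: abs_mult h_def)
qed

lemma square_le_max_square:
  fixes p q :: int
  assumes "0 \<le> p" "0 \<le> q"
  shows "p^2 \<le> max p q^2" "q^2 \<le> max p q^2"
  using assms by (auto intro: power_mono)

lemma card_ax_region_small:
  fixes g p q W :: int
  assumes "0 \<le> p" "0 \<le> q" "\<bar>g\<bar> * max p q^2 < 24 * int H"
  shows "real (card (ax_region H g p q W)) \<le> 288 * real H + 2"
proof -
  define h where "h = int H"
  have "\<bar>g * p^2\<bar> \<le> \<bar>g\<bar> * max p q^2" "\<bar>g * q^2\<bar> \<le> \<bar>g\<bar> * max p q^2"
    using square_le_max_square[OF assms(1,2)] by (simp_all add: abs_mult mult_left_mono)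
  then have small: "\<bar>g * p^2\<bar> < 24 * h" "\<bar>g * q^2\<bar> < 24 * h"
    using assms(3) by (simp_all add: h_def)
  have "ax_region H g p q W \<subseteq> {(y, z). y^2 \<le> 36 * h \<and> z^2 \<le> 36 * h}"
  proof safe
    fix a x assume "(a, x) \<in> ax_region H g p q W"
    then have "\<bar>x\<bar> \<le> 2 * h" "\<bar>a^2 + g * p^2 + 4 * x\<bar> \<le> 4 * h" "\<bar>x^2 + g * q^2\<bar> \<le> 4 * h"
      by (simp_all add: ax_region_def h_def)
    with small show "a^2 \<le> 36 * h" "x^2 \<le> 36 * h"
      by (simp_all only: abs_le_iff abs_less_iff; linarith)+
  qed
  then have "real (card (ax_region H g p q W)) \<le> 8 * of_int (36 * h) + 2"
    by (rule card_pairs_small_squares) (simp add: h_def)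
  then show ?thesis
    by (simp add: h_def)
qed

lemma card_pairs_window_le:
  fixes E :: "(int \<times> int) set" and A W :: int
  assumes E: "E \<subseteq> {(y, z). \<bar>y^2 - A\<bar> \<le> 12 * int H \<and> \<bar>y * z - W\<bar> \<le> 2 * int H}"
    and "1 \<le> H" "24 * int H \<le> A" "A \<le> 13 * int H^2"
  shows "real (card E) * of_int A \<le> 818 * real H^2"
proof -
  have "(real (card E) * of_int A)^2
      \<le> (32 * of_int (12 * int H)^2 + 8 * of_int A) * (16 * of_int (2 * int H)^2 + 6 * of_int A)"
    using assms(2,3) by (intro card_pairs_near_square_multiple[OF E]) auto
  also have "\<dots> \<le> (4712 * real H^2) * (142 * real H^2)"
  proof -
    have "real_of_int A \<le> of_int (13 * int H^2)"
      using \<open>A \<le> 13 * int H^2\<close> by (simp only: of_int_le_iff)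
    then show ?thesis
      using \<open>24 * int H \<le> A\<close> by (intro mult_mono) (simp_all add: power_mult_distrib)
  qed
  also have "\<dots> \<le> (818 * real H^2)^2"
    by (simp add: power2_eq_square)
  finally show ?thesis
    by (rule power2_le_imp_le) simp
qed

lemma ax_region_subset_window_a:
  assumes "1 \<le> H" "24 * int H \<le> \<bar>g\<bar> * p^2"
  shows "ax_region H g p q W
    \<subseteq> {(a, x). \<bar>a^2 - \<bar>g\<bar> * p^2\<bar> \<le> 12 * int H \<and> \<bar>a * x - W\<bar> \<le> 2 * int H}"
proof safe
  fix a x assume ax: "(a, x) \<in> ax_region H g p q W"
  then have bounds: "x \<le> 2 * int H" "-x \<le> 2 * int H"
      "a^2 + g * p^2 + 4 * x \<le> 4 * int H" "-(a^2 + g * p^2 + 4 * x) \<le> 4 * int H"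
    by (simp_all add: ax_region_def abs_le_iff)
  then have "g * p^2 < \<bar>g\<bar> * p^2"
    using assms zero_le_power2[of a] by linarith
  then have "\<bar>g\<bar> * p^2 = - (g * p^2)"
    by (cases "g < 0") auto
  with bounds show "\<bar>a^2 - \<bar>g\<bar> * p^2\<bar> \<le> 12 * int H"
    unfolding abs_le_iff by (intro conjI) linarith+
  show "\<bar>a * x - W\<bar> \<le> 2 * int H"
    using ax by (simp add: ax_region_def)
qed

lemma ax_region_subset_window_x:
  assumes "1 \<le> H" "24 * int H \<le> \<bar>g\<bar> * q^2"
  shows "ax_region H g p q W
    \<subseteq> {(a, x). \<bar>x^2 - \<bar>g\<bar> * q^2\<bar> \<le> 4 * int H \<and> \<bar>x * a - W\<bar> \<le> 2 * int H}"
proof safe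
  fix a x assume ax: "(a, x) \<in> ax_region H g p q W"
  then have bounds: "x^2 + g * q^2 \<le> 4 * int H" "-(x^2 + g * q^2) \<le> 4 * int H"
    by (simp_all add: ax_region_def abs_le_iff)
  then have "g * q^2 < \<bar>g\<bar> * q^2"
    using assms zero_le_power2[of x] by linarith
  then have "\<bar>g\<bar> * q^2 = - (g * q^2)"
    by (cases "g < 0") auto
  with bounds show "\<bar>x^2 - \<bar>g\<bar> * q^2\<bar> \<le> 4 * int H"
    unfolding abs_le_iff by (intro conjI) linarith+
  show "\<bar>x * a - W\<bar> \<le> 2 * int H"
    using ax by (simp add: ax_region_def mult.commute)
qed

lemma card_ax_region_large:
  fixes g p q W :: int
  assumes "1 \<le> H" and large: "24 * int H \<le> \<bar>g\<bar> * max p q^2"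
    and bounded: "\<bar>g\<bar> * max p q^2 \<le> 13 * int H^2"
  shows "real (card (ax_region H g p q W)) * of_int (\<bar>g\<bar> * max p q^2) \<le> 818 * real H^2"
proof (cases "q \<le> p")
  case True
  then have "ax_region H g p q W
      \<subseteq> {(a, x). \<bar>a^2 - \<bar>g\<bar> * max p q^2\<bar> \<le> 12 * int H \<and> \<bar>a * x - W\<bar> \<le> 2 * int H}"
    using ax_region_subset_window_a[OF assms(1)] large by (simp add: max_def)
  then show ?thesis
    using assms by (rule card_pairs_window_le)
next
  case False
  then have "ax_region H g p q W
      \<subseteq> {(a, x). \<bar>x^2 - \<bar>g\<bar> * max p q^2\<bar> \<le> 4 * int H \<and> \<bar>x * a - W\<bar> \<le> 2 * int H}"
    using ax_region_subset_window_x[OF assms(1)] large by (simp add: max_def)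
  then have "prod.swap ` ax_region H g p q W
      \<subseteq> {(y, z). \<bar>y^2 - \<bar>g\<bar> * max p q^2\<bar> \<le> 12 * int H \<and> \<bar>y * z - W\<bar> \<le> 2 * int H}"
    by force
  then have "real (card (prod.swap ` ax_region H g p q W)) * of_int (\<bar>g\<bar> * max p q^2) \<le> 818 * real H^2"
    using assms by (rule card_pairs_window_le)
  then show ?thesis
    by (simp add: card_image)
qed

lemma card_ax_region:
  fixes g p q W :: int
  assumes "1 \<le> H" "0 \<le> p" "0 \<le> q"
  shows "real (card (ax_region H g p q W)) * of_int (\<bar>g\<bar> * max p q^2) \<le> 6960 * real H^2"
proof (cases "ax_region H g p q W = {}")
  case False
  then obtain a x where "(a, x) \<in> ax_region H g p q W"
    by auto
  then have bounded: "\<bar>g\<bar> * max p q^2 \<le> 13 * int H^2"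
    using ax_region_param_bounds by (simp add: max_def)
  show ?thesis
  proof (cases "\<bar>g\<bar> * max p q^2 < 24 * int H")
    case True
    then have "real_of_int (\<bar>g\<bar> * max p q^2) \<le> of_int (24 * int H)"
      by (simp only: of_int_le_iff)
    moreover have "real (card (ax_region H g p q W)) \<le> 290 * real H"
      using card_ax_region_small[OF assms(2,3) True, of W] assms(1) by simp
    ultimately have "real (card (ax_region H g p q W)) * of_int (\<bar>g\<bar> * max p q^2) \<le> (290 * real H) * (24 * real H)"
      by (intro mult_mono) auto
    then show ?thesis
      by (simp add: power2_eq_square)
  next
    case False
    then have "real (card (ax_region H g p q W)) * of_int (\<bar>g\<bar> * max p q^2) \<le> 818 * real H^2"
      using card_ax_region_large[OF assms(1) _ bounded, of W] by simp
    then show ?thesis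
      using zero_le_power2[of "real H"] by linarith
  qed
qed simp

definition fiber :: "nat \<Rightarrow> int \<Rightarrow> int \<Rightarrow> int \<Rightarrow> int \<Rightarrow> (int \<times> int \<times> int \<times> int \<times> int) set" where
  "fiber H g p q W = solutions H \<inter>
     {(x, a, b, c, d). 4 * b - 4 * x - a^2 = g * p^2 \<and> 4 * d - x^2 = g * q^2 \<and> a * x - 2 * c = W}"

lemma fiber_imp_ax_region:
  assumes "(x, a, b, c, d) \<in> fiber H g p q W"
  shows "(a, x) \<in> ax_region H g p q W"
proof -
  have "a^2 + g * p^2 + 4 * x = 4 * b" "x^2 + g * q^2 = 4 * d" "a * x - W = 2 * c"
    using assms by (auto simp: fiber_def)
  with assms show ?thesis
    by (auto simp: fiber_def solutions_def ax_region_def)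
qed

lemma card_fiber_le: "card (fiber H g p q W) \<le> card (ax_region H g p q W)"
proof (rule card_inj_on_le[where f = "\<lambda>(x, a, b, c, d). (a, x)"])
  show "inj_on (\<lambda>(x, a, b, c, d). (a, x)) (fiber H g p q W)"
    by (auto simp: inj_on_def fiber_def)
  show "(\<lambda>(x, a, b, c, d). (a, x)) ` fiber H g p q W \<subseteq> ax_region H g p q W"
    using fiber_imp_ax_region by auto
qed (rule finite_ax_region)

definition shape_class :: "nat \<Rightarrow> nat \<Rightarrow> nat \<Rightarrow> nat \<Rightarrow> (int \<times> int \<times> int \<times> int \<times> int) set" where
  "shape_class H G p q = solutions H \<inter>
     {(x, a, b, c, d). \<bar>4 * b - 4 * x - a^2\<bar> = int (G * p^2) \<and> \<bar>4 * d - x^2\<bar> = int (G * q^2)}"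

lemma shape_class_subset_fibers:
  assumes "1 \<le> G" "1 \<le> p" "1 \<le> q"
  shows "shape_class H G p q
    \<subseteq> (\<Union>g\<in>{int G, - int G}. \<Union>W\<in>{g * p * q, - (g * p * q)}. fiber H g (int p) (int q) W)"
proof clarify
  fix x a b c d
  assume t: "(x, a, b, c, d) \<in> shape_class H G p q"
  define u where "u = 4 * b - 4 * x - a^2"
  define v where "v = 4 * d - x^2"
  define w where "w = a * x - 2 * c"
  have sol: "(x, a, b, c, d) \<in> solutions H" and "\<bar>u\<bar> = int G * int p^2" "\<bar>v\<bar> = int G * int q^2"
    using t by (simp_all add: shape_class_def u_def v_def)
  have "u * v = w^2"
    using solutions_square_eq[OF sol] by (simp add: u_def v_def w_def)
  have "u \<noteq> 0" "v \<noteq> 0"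
    using \<open>\<bar>u\<bar> = _\<close> \<open>\<bar>v\<bar> = _\<close> assms by auto
  have "0 \<le> u * v"
    using \<open>u * v = w^2\<close> by simp
  obtain g where g: "g \<in> {int G, - int G}" "u = g * int p^2" "v = g * int q^2"
  proof (cases "0 < u")
    case True
    with \<open>0 \<le> u * v\<close> \<open>v \<noteq> 0\<close> have "0 < v"
      by (simp add: zero_le_mult_iff)
    with True show thesis
      using that[of "int G"] \<open>\<bar>u\<bar> = _\<close> \<open>\<bar>v\<bar> = _\<close> by simp
  next
    case False
    with \<open>0 \<le> u * v\<close> \<open>u \<noteq> 0\<close> \<open>v \<noteq> 0\<close> have "u < 0" "v < 0"
      by (auto simp: zero_le_mult_iff)
    then show thesis
      using that[of "- int G"] \<open>\<bar>u\<bar> = _\<close> \<open>\<bar>v\<bar> = _\<close> by simp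
  qed
  have "w^2 = (g * int p * int q)^2"
    using \<open>u * v = w^2\<close> g by (simp add: power2_eq_square algebra_simps)
  then have "w \<in> {g * int p * int q, - (g * int p * int q)}"
    by (simp add: power2_eq_iff)
  moreover have "(x, a, b, c, d) \<in> fiber H g (int p) (int q) w"
    using sol g by (simp add: fiber_def u_def v_def w_def)
  ultimately show "(x, a, b, c, d)
    \<in> (\<Union>g\<in>{int G, - int G}. \<Union>W\<in>{g * p * q, - (g * p * q)}. fiber H g (int p) (int q) W)"
    using g(1) by blast
qed

lemma card_fiber:
  assumes "1 \<le> H" "\<bar>g\<bar> = int G" "1 \<le> G" "1 \<le> p" "1 \<le> q"
  shows "real (card (fiber H g (int p) (int q) W)) \<le> 6960 * real H^2 / (real G * real (max p q)^2)"
proof -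
  let ?P = "real G * real (max p q)^2"
  have "max (int p) (int q) = int (max p q)"
    by simp
  then have "real_of_int (\<bar>g\<bar> * max (int p) (int q)^2) = ?P"
    using assms(2) by simp
  then have region: "real (card (ax_region H g (int p) (int q) W)) * ?P \<le> 6960 * real H^2"
    using card_ax_region[OF assms(1), of "int p" "int q" g W] by simp
  have "real (card (fiber H g (int p) (int q) W)) * ?P \<le> real (card (ax_region H g (int p) (int q) W)) * ?P"
    using card_fiber_le by (intro mult_right_mono) simp_all
  with region have "real (card (fiber H g (int p) (int q) W)) * ?P \<le> 6960 * real H^2"
    by linarith
  moreover have "0 < ?P"
    using assms by simp
  ultimately show ?thesis
    by (simp add: pos_le_divide_eq)
qed

lemma card_shape_class:
  assumes "1 \<le> H" "1 \<le> G" "1 \<le> p" "1 \<le> q"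
  shows "real (card (shape_class H G p q)) \<le> 4 * (6960 * real H^2 / (real G * real (max p q)^2))"
proof -
  let ?K = "6960 * real H^2 / (real G * real (max p q)^2)"
  let ?F = "\<lambda>g. \<Union>W\<in>{g * p * q, - (g * p * q)}. fiber H g (int p) (int q) W"
  have fin: "finite (fiber H g p q W)" for g p q W
    using finite_solutions by (rule finite_subset[rotated]) (auto simp: fiber_def)
  have "card (shape_class H G p q) \<le> card (\<Union>g\<in>{int G, - int G}. ?F g)"
    using shape_class_subset_fibers[OF assms(2-4)] fin by (intro card_mono) auto
  also have "\<dots> \<le> (\<Sum>g\<in>{int G, - int G}. \<Sum>W\<in>{g * p * q, - (g * p * q)}. card (fiber H g (int p) (int q) W))"
    by (intro order_trans[OF card_UN_le] sum_mono card_UN_le) auto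
  finally have "real (card (shape_class H G p q))
      \<le> (\<Sum>g\<in>{int G, - int G}. \<Sum>W\<in>{g * p * q, - (g * p * q)}. real (card (fiber H g (int p) (int q) W)))"
    by (metis (no_types, lifting) of_nat_le_iff of_nat_sum sum.cong)
  also have "\<dots> \<le> (\<Sum>g\<in>{int G, - int G}. \<Sum>W\<in>{g * p * q, - (g * p * q)}. ?K)"
    using assms by (intro sum_mono card_fiber) auto
  also have "\<dots> \<le> 4 * ?K"
    using assms by (simp add: card_insert_if)
  finally show ?thesis .
qed

lemma nondegenerate_solutions_subset:
  "solutions H \<inter> {(x, a, b, c, d). a * x - 2 * c \<noteq> 0}
    \<subseteq> (\<Union>G\<in>{1..13 * H^2}. \<Union>p\<in>{1..13 * H^2}. \<Union>q\<in>{1..13 * H^2}. shape_class H G p q)"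
proof clarify
  fix x a b c d
  assume sol: "(x, a, b, c, d) \<in> solutions H" and "a * x - 2 * c \<noteq> 0"
  obtain g p q where "p \<noteq> 0" "q \<noteq> 0" and u: "4 * b - 4 * x - a^2 = g * p^2" and v: "4 * d - x^2 = g * q^2"
    using product_eq_square_imp_common_factor[OF solutions_square_eq[OF sol] \<open>a * x - 2 * c \<noteq> 0\<close>] .
  have "g \<noteq> 0"
    using solutions_square_eq[OF sol] \<open>a * x - 2 * c \<noteq> 0\<close> u by auto
  have "(a, x) \<in> ax_region H g p q (a * x - 2 * c)"
    using sol u v by (intro fiber_imp_ax_region) (simp add: fiber_def)
  note bounds = ax_region_param_bounds[OF this]
  have "0 < p^2" "0 < q^2" "0 < \<bar>g\<bar>"
    using \<open>p \<noteq> 0\<close> \<open>q \<noteq> 0\<close> \<open>g \<noteq> 0\<close> by simp_all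
  then have "\<bar>g\<bar> * 1 \<le> \<bar>g\<bar> * p^2" "1 * p^2 \<le> \<bar>g\<bar> * p^2" "1 * q^2 \<le> \<bar>g\<bar> * q^2"
    by (intro mult_left_mono mult_right_mono; linarith)+
  then have "\<bar>g\<bar> \<le> 13 * int H^2" "\<bar>p\<bar> \<le> 13 * int H^2" "\<bar>q\<bar> \<le> 13 * int H^2"
    using bounds abs_le_square_int[of p] abs_le_square_int[of q] by linarith+
  define G P Q where "G = nat \<bar>g\<bar>" and "P = nat \<bar>p\<bar>" and "Q = nat \<bar>q\<bar>"
  have GPQ: "int G = \<bar>g\<bar>" "int P = \<bar>p\<bar>" "int Q = \<bar>q\<bar>"
    by (simp_all add: G_def P_def Q_def)
  have "G \<in> {1..13 * H^2}" "P \<in> {1..13 * H^2}" "Q \<in> {1..13 * H^2}"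
    using \<open>\<bar>g\<bar> \<le> 13 * int H^2\<close> \<open>\<bar>p\<bar> \<le> 13 * int H^2\<close> \<open>\<bar>q\<bar> \<le> 13 * int H^2\<close>
      \<open>p \<noteq> 0\<close> \<open>q \<noteq> 0\<close> \<open>g \<noteq> 0\<close>
    by (simp_all add: G_def P_def Q_def nat_le_iff)
  moreover have "(x, a, b, c, d) \<in> shape_class H G P Q"
    using sol u v GPQ by (simp add: shape_class_def abs_mult)
  ultimately show "(x, a, b, c, d)
    \<in> (\<Union>G\<in>{1..13 * H^2}. \<Union>p\<in>{1..13 * H^2}. \<Union>q\<in>{1..13 * H^2}. shape_class H G p q)"
    by blast
qed

lemma card_nondegenerate_solutions:
  assumes "1 \<le> H"
  shows "real (card (solutions H \<inter> {(x, a, b, c, d). a * x - 2 * c \<noteq> 0}))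
    \<le> 55680 * real H^2 * harm (13 * H^2)^2"
proof -
  define M where "M = 13 * H^2"
  define K where "K = 4 * 6960 * real H^2"
  define T where "T = (\<Sum>p\<in>{1..M}. \<Sum>q\<in>{1..M}. 1 / real (max p q)^2)"
  have fin: "finite (shape_class H G p q)" for G p q
    using finite_solutions by (rule finite_subset[rotated]) (auto simp: shape_class_def)
  have "card (solutions H \<inter> {(x, a, b, c, d). a * x - 2 * c \<noteq> 0})
      \<le> card (\<Union>G\<in>{1..M}. \<Union>p\<in>{1..M}. \<Union>q\<in>{1..M}. shape_class H G p q)"
    using nondegenerate_solutions_subset fin unfolding M_def by (intro card_mono) auto
  also have "\<dots> \<le> (\<Sum>G\<in>{1..M}. \<Sum>p\<in>{1..M}. \<Sum>q\<in>{1..M}. card (shape_class H G p q))"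
    by (intro order_trans[OF card_UN_le] sum_mono card_UN_le) auto
  finally have "real (card (solutions H \<inter> {(x, a, b, c, d). a * x - 2 * c \<noteq> 0}))
      \<le> (\<Sum>G\<in>{1..M}. \<Sum>p\<in>{1..M}. \<Sum>q\<in>{1..M}. real (card (shape_class H G p q)))"
    by (metis (no_types, lifting) of_nat_le_iff of_nat_sum sum.cong)
  also have "\<dots> \<le> (\<Sum>G\<in>{1..M}. \<Sum>p\<in>{1..M}. \<Sum>q\<in>{1..M}. K * (1 / real G) * (1 / real (max p q)^2))"
    using assms by (intro sum_mono) (simp add: card_shape_class[simplified] K_def)
  also have "\<dots> = (\<Sum>G\<in>{1..M}. K * (1 / real G) * T)"
    by (simp only: sum_distrib_left T_def)
  also have "\<dots> = K * harm M * T"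
    by (simp add: harm_def divide_inverse sum_distrib_left sum_distrib_right mult.assoc)
  also have "\<dots> \<le> K * harm M * (2 * harm M)"
    unfolding T_def by (intro mult_left_mono sum_inverse_max_square_le) (simp add: K_def harm_nonneg)
  also have "\<dots> = 55680 * real H^2 * harm (13 * H^2)^2"
    by (simp add: K_def M_def power2_eq_square)
  finally show ?thesis .
qed

lemma card_degenerate_solutions_le_harm:
  assumes "1 \<le> H"
  shows "real (card (solutions H \<inter> {(x, a, b, c, d). a * x - 2 * c = 0}))
    \<le> 108 * real H^2 * harm (13 * H^2)^2"
proof -
  define L :: real where "L = harm (13 * H^2)"
  have "1 \<le> real H"
    using assms by simp
  have "1 \<le> L"
    using harm_mono[of 1 "13 * H^2"] assms by (simp add: L_def harm_def)
  have "harm (2 * H) \<le> L"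
    using assms unfolding L_def by (intro harm_mono) (simp add: power2_eq_square)
  have "real H * 1 \<le> real H * L" "8 * real H * harm (2 * H) \<le> 8 * real H * L"
    using \<open>1 \<le> L\<close> \<open>harm (2 * H) \<le> L\<close> by (intro mult_left_mono; simp)+
  then have pairs: "real (card (small_product_pairs H)) \<le> 18 * real H * L"
    using card_small_product_pairs[of H] \<open>1 \<le> real H\<close> by linarith
  have "real (card (solutions H \<inter> {(x, a, b, c, d). a * x - 2 * c = 0}))
      \<le> real (2 * (card (small_product_pairs H) * (2 * H + 1)))"
    using card_degenerate_solutions[of H] by (simp only: of_nat_le_iff)
  also have "\<dots> = 2 * (real (card (small_product_pairs H)) * (2 * real H + 1))"
    by (simp add: algebra_simps)
  also have "\<dots> \<le> 2 * ((18 * real H * L) * (3 * real H))"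
    using pairs \<open>1 \<le> real H\<close> \<open>1 \<le> L\<close> by (intro mult_left_mono mult_mono) simp_all
  also have "\<dots> = 108 * real H^2 * (L * 1)"
    by (simp add: power2_eq_square)
  also have "\<dots> \<le> 108 * real H^2 * (L * L)"
    using \<open>1 \<le> L\<close> by (intro mult_left_mono) simp_all
  finally show ?thesis
    by (simp add: L_def power2_eq_square)
qed

lemma R_le_harm:
  assumes "1 \<le> H"
  shows "real (R H) \<le> 55788 * real H^2 * harm (13 * H^2)^2"
proof -
  let ?Z = "solutions H \<inter> {(x, a, b, c, d). a * x - 2 * c = 0}"
  let ?N = "solutions H \<inter> {(x, a, b, c, d). a * x - 2 * c \<noteq> 0}"
  have "solutions H \<subseteq> ?Z \<union> ?N"
    by auto
  then have "card (solutions H) \<le> card ?Z + card ?N"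
    using finite_solutions by (meson card_Un_le card_mono finite_Int finite_UnI le_trans)
  then have "real (R H) \<le> real (card ?Z) + real (card ?N)"
    by (simp add: R_eq_card_solutions)
  then show ?thesis
    using card_degenerate_solutions_le_harm[OF assms] card_nondegenerate_solutions[OF assms] by simp
qed

lemma harm_13_square_le_ln:
  assumes "3 \<le> H"
  shows "harm (13 * H^2) \<le> 15 * ln (real H)"
proof -
  have "1 \<le> ln (real H)"
    using exp_le assms ln_ge_iff[of "real H" 1] by simp
  have "harm (13 * H^2) \<le> ln (real (13 * H^2)) + 1"
    using assms by (intro harm_le_ln_plus_one) simp
  also have "ln (real (13 * H^2)) = ln 13 + 2 * ln (real H)"
    using assms by (simp add: ln_mult ln_realpow)
  also have "ln (13::real) \<le> 12"
    using ln_le_minus_one[of 13] by simp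
  finally show ?thesis
    using \<open>1 \<le> ln (real H)\<close> by linarith
qed

theorem proposition3p1:
  shows "(\<lambda>H. real (R H)) \<in> O(\<lambda>H. real H ^ 2 * (ln (real H)) ^ 2)"
proof (rule bigoI[where c = "55788 * 15^2"])
  show "\<forall>\<^sub>F H in at_top. norm (real (R H)) \<le> 55788 * 15^2 * norm (real H ^ 2 * (ln (real H)) ^ 2)"
    using eventually_ge_at_top[of "3::nat"]
  proof eventually_elim
    case (elim H)
    have "harm (13 * H^2)^2 \<le> (15 * ln (real H))^2"
      using harm_13_square_le_ln[OF elim] harm_nonneg by (intro power_mono) auto
    have "real (R H) \<le> 55788 * real H^2 * harm (13 * H^2)^2"
      using R_le_harm[of H] elim by simp
    also have "\<dots> \<le> 55788 * real H^2 * (15 * ln (real H))^2"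
      using \<open>harm (13 * H^2)^2 \<le> _\<close> by (intro mult_left_mono) simp_all
    also have "\<dots> = 55788 * 15^2 * (real H^2 * ln (real H)^2)"
      by (simp add: power_mult_distrib)
    finally show ?case
      by simp
  qed
qed

end
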